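(* Let $G$ be a planar triangulation on $n$ vertices with no separating triangle, with a fixed planar embedding. Let $H$ be the planar triangulation obtained from $G$ by adding, for each facial triangle $t$ of $G$, a new vertex $v_t$ adjacent to the three vertices of $t$. Then $\nu(H)\leq 2n-4$.
   Context: A planar triangulation is a maximal planar simple graph; in any planar embedding all its faces are bounded by triangles, called facial triangles. A separating triangle of $G$ is a triangle whose vertex set, when removed, disconnects $G$ (equivalently, in the embedding, a triangle with vertices both inside and outside it). $\nu(H)$ is the maximum number of pairwise edge-disjoint triangles in $H$. *)

theory Defs
  imports Main
begin

definition simple_graph :: "'a set \<Rightarrow> 'a set set \<Rightarrow> bool" where
  "simple_graph V E \<longleftrightarrow> finite V \<and> (\<forall>e\<in>E. e \<subseteq> V \<and> card e = 2)"

definition adj_rel :: "'a set set \<Rightarrow> ('a \<times> 'a) set" where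
  "adj_rel E = {(x, y). {x, y} \<in> E}"

definition graph_connected :: "'a set \<Rightarrow> 'a set set \<Rightarrow> bool" where
  "graph_connected V E \<longleftrightarrow> (\<forall>x\<in>V. \<forall>y\<in>V. (x, y) \<in> (adj_rel E)\<^sup>*)"

definition triangles :: "'a set \<Rightarrow> 'a set set \<Rightarrow> 'a set set" where
  "triangles V E = {T. T \<subseteq> V \<and> card T = 3 \<and> (\<forall>u\<in>T. \<forall>w\<in>T. u \<noteq> w \<longrightarrow> {u, w} \<in> E)}"

definition delete_verts :: "'a set set \<Rightarrow> 'a set \<Rightarrow> 'a set set" where
  "delete_verts E S = {e \<in> E. e \<inter> S = {}}"

definition separating_triangle :: "'a set \<Rightarrow> 'a set set \<Rightarrow> 'a set \<Rightarrow> bool" where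
  "separating_triangle V E T \<longleftrightarrow>
     T \<in> triangles V E \<and> \<not> graph_connected (V - T) (delete_verts E T)"

text \<open>A plane triangulation, i.e. a planar triangulation with a fixed planar embedding,
  described combinatorially by its faces: a finite index set F of faces, each face f
  bounded by the triangle fv f, such that gluing the faces along the edges yields a
  triangulated 2-sphere (every edge lies on exactly two faces, the faces around every
  vertex form a single cycle, the graph is connected, and Euler's formula
  |V| - |E| + |F| = 2 holds).\<close>

definition faces_at :: "'f set \<Rightarrow> ('f \<Rightarrow> 'a set) \<Rightarrow> 'a \<Rightarrow> 'f set" where
  "faces_at F fv x = {f \<in> F. x \<in> fv f}"

definition face_adj_at :: "'f set \<Rightarrow> ('f \<Rightarrow> 'a set) \<Rightarrow> 'a \<Rightarrow> ('f \<times> 'f) set" where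
  "face_adj_at F fv x = {(f, g). f \<in> faces_at F fv x \<and> g \<in> faces_at F fv x \<and> f \<noteq> g \<and>
                                  (\<exists>y. y \<noteq> x \<and> y \<in> fv f \<and> y \<in> fv g)}"

definition plane_triangulation ::
  "'a set \<Rightarrow> 'a set set \<Rightarrow> 'f set \<Rightarrow> ('f \<Rightarrow> 'a set) \<Rightarrow> bool" where
  "plane_triangulation V E F fv \<longleftrightarrow>
     simple_graph V E \<and> graph_connected V E \<and> finite F \<and>
     (\<forall>f\<in>F. fv f \<in> triangles V E) \<and>
     (\<forall>e\<in>E. card {f \<in> F. e \<subseteq> fv f} = 2) \<and>
     (\<forall>x\<in>V. \<forall>f\<in>faces_at F fv x. \<forall>g\<in>faces_at F fv x. (f, g) \<in> (face_adj_at F fv x)\<^sup>*) \<and>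
     int (card V) - int (card E) + int (card F) = 2"

text \<open>The graph H: add a new vertex v_t (= Inr t) for every face t, adjacent to the
  three vertices of t.\<close>

definition stack_verts :: "'a set \<Rightarrow> 'f set \<Rightarrow> ('a + 'f) set" where
  "stack_verts V F = Inl ` V \<union> Inr ` F"

definition stack_edges :: "'a set set \<Rightarrow> 'f set \<Rightarrow> ('f \<Rightarrow> 'a set) \<Rightarrow> ('a + 'f) set set" where
  "stack_edges E F fv = (\<lambda>e. Inl ` e) ` E \<union> {{Inl x, Inr f} | x f. f \<in> F \<and> x \<in> fv f}"

definition edge_disjoint_triangles :: "'a set \<Rightarrow> 'a set set \<Rightarrow> 'a set set \<Rightarrow> bool" where
  "edge_disjoint_triangles V E S \<longleftrightarrow> S \<subseteq> triangles V E \<and>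
     (\<forall>T1\<in>S. \<forall>T2\<in>S. T1 \<noteq> T2 \<longrightarrow> card (T1 \<inter> T2) \<le> 1)"

definition nu :: "'a set \<Rightarrow> 'a set set \<Rightarrow> nat" where
  "nu V E = Max {card S | S. edge_disjoint_triangles V E S}"

end

theory Submission
  imports Defs
begin

text \<open>Each facial triangle t of G spans, together with v_t, a copy of K_4 in H, and two
  edge-disjoint triangles never lie in the same K_4. If G has no separating triangle, then every
  triangle of G is facial, so every triangle of H lies in one of these |F| copies of K_4 and hence
  \<open>\<nu>(H) \<le> |F| = 2n - 4\<close>.

  That triangles of G are facial is the Jordan curve theorem in combinatorial form. If a
  non-facial triangle T left G - T connected, the dual graph minus the three edges of T would be
  connected. The complement of a spanning tree of it is then a connected spanning subgraph of G
  that still contains the cycle T, and counting the edges of both contradicts Euler's formula.\<close>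

section \<open>Connectivity of multigraphs\<close>

text \<open>A multigraph on the vertices N with edge set I, where the edge i joins the vertices in
  ends i. It describes G itself (ends = id) as well as its dual (the edge e joins the faces
  containing it).\<close>

definition mg_adj :: "'i set \<Rightarrow> ('i \<Rightarrow> 'n set) \<Rightarrow> ('n \<times> 'n) set" where
  "mg_adj I ends = {(x, y). \<exists>i\<in>I. x \<in> ends i \<and> y \<in> ends i}"

definition mg_connected :: "'n set \<Rightarrow> 'i set \<Rightarrow> ('i \<Rightarrow> 'n set) \<Rightarrow> bool" where
  "mg_connected N I ends \<longleftrightarrow> (\<forall>x\<in>N. \<forall>y\<in>N. (x, y) \<in> (mg_adj I ends)\<^sup>*)"

lemma mg_adjI: "i \<in> I \<Longrightarrow> x \<in> ends i \<Longrightarrow> y \<in> ends i \<Longrightarrow> (x, y) \<in> mg_adj I ends"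
  unfolding mg_adj_def by blast

lemma mg_adj_mono: "I \<subseteq> J \<Longrightarrow> mg_adj I ends \<subseteq> mg_adj J ends"
  unfolding mg_adj_def by blast

lemma sym_mg_adj: "sym (mg_adj I ends)"
  unfolding mg_adj_def sym_def by blast

lemma two_equal_if_card_le_2:
  assumes "finite S" "card S \<le> 2" "x \<in> S" "y \<in> S" "z \<in> S"
  shows "x = y \<or> y = z \<or> x = z"
proof (rule ccontr)
  assume "\<not> ?thesis"
  then have "card {x, y, z} = 3" by auto
  moreover have "card {x, y, z} \<le> card S" using assms by (intro card_mono) auto
  ultimately show False using assms(2) by simp
qed

text \<open>Every vertex x other than a root r lies on an edge leading strictly closer to r. Choosing
  one such edge for each x is injective, since an edge has at most two ends.\<close>

lemma mg_connected_card_le: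
  assumes "finite N" "finite I"
    and ends: "\<And>i. i \<in> I \<Longrightarrow> finite (ends i) \<and> card (ends i) \<le> 2"
    and conn: "mg_connected N I ends"
  shows "card N \<le> card I + 1"
proof (cases "N = {}")
  case False
  then obtain r where r: "r \<in> N" by blast
  define R where "R = mg_adj I ends"
  define dist where "dist x = (LEAST n. (x, r) \<in> R ^^ n)" for x
  have "\<exists>i\<in>I. x \<in> ends i \<and> (\<exists>y\<in>ends i. dist y < dist x)" if x: "x \<in> N - {r}" for x
  proof -
    have "(x, r) \<in> R\<^sup>*" using conn x r unfolding mg_connected_def R_def by blast
    then obtain n where "(x, r) \<in> R ^^ n" using rtrancl_power by blast
    then have dx: "(x, r) \<in> R ^^ dist x" unfolding dist_def by (rule LeastI)
    with x obtain m where m: "dist x = Suc m" by (cases "dist x") auto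
    with dx have "(x, r) \<in> R ^^ Suc m" by simp
    then obtain y where xy: "(x, y) \<in> R" and "(y, r) \<in> R ^^ m" by (rule relpow_Suc_E2)
    then have "dist y \<le> m" unfolding dist_def by (intro Least_le)
    moreover obtain i where "i \<in> I" "x \<in> ends i" "y \<in> ends i"
      using xy unfolding R_def mg_adj_def by blast
    ultimately show ?thesis using m by force
  qed
  then obtain \<phi> where \<phi>: "\<And>x. x \<in> N - {r} \<Longrightarrow>
      \<phi> x \<in> I \<and> x \<in> ends (\<phi> x) \<and> (\<exists>y\<in>ends (\<phi> x). dist y < dist x)"
    by metis
  have "inj_on \<phi> (N - {r})"
  proof (rule inj_onI, rule ccontr)
    fix x x' assume x: "x \<in> N - {r}" and x': "x' \<in> N - {r}" and eq: "\<phi> x = \<phi> x'" and "x \<noteq> x'"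
    obtain y y' where y: "y \<in> ends (\<phi> x)" "dist y < dist x"
      and y': "y' \<in> ends (\<phi> x)" "dist y' < dist x'"
      using \<phi>[OF x] \<phi>[OF x'] eq by metis
    have "finite (ends (\<phi> x))" "card (ends (\<phi> x)) \<le> 2" using ends \<phi>[OF x] by auto
    then have "y = x'" "y' = x"
      using two_equal_if_card_le_2[of "ends (\<phi> x)" x y x'] two_equal_if_card_le_2[of "ends (\<phi> x)" x' y' x]
        \<phi>[OF x] \<phi>[OF x'] eq y y' \<open>x \<noteq> x'\<close> by auto
    then show False using y y' by simp
  qed
  moreover have "\<phi> ` (N - {r}) \<subseteq> I" using \<phi> by auto
  ultimately have "card (N - {r}) \<le> card I" using \<open>finite I\<close> by (rule card_inj_on_le)
  then show ?thesis using r \<open>finite N\<close> by simp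
qed simp

lemma mg_connected_Diff_edge:
  assumes conn: "mg_connected N I ends" and e: "ends e = {a, b}"
    and ab: "(a, b) \<in> (mg_adj (I - {e}) ends)\<^sup>*"
  shows "mg_connected N (I - {e}) ends"
proof -
  have ba: "(b, a) \<in> (mg_adj (I - {e}) ends)\<^sup>*"
    by (rule symD[OF sym_rtrancl[OF sym_mg_adj] ab])
  have "mg_adj I ends \<subseteq> (mg_adj (I - {e}) ends)\<^sup>*"
  proof
    fix p assume "p \<in> mg_adj I ends"
    then obtain x y i where p: "p = (x, y)" "i \<in> I" "x \<in> ends i" "y \<in> ends i"
      unfolding mg_adj_def by blast
    show "p \<in> (mg_adj (I - {e}) ends)\<^sup>*"
    proof (cases "i = e")
      case True
      then show ?thesis using p e ab ba by auto
    next
      case False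
      then show ?thesis using p by (auto intro: mg_adjI)
    qed
  qed
  then show ?thesis
    using conn rtrancl_subset_rtrancl unfolding mg_connected_def by blast
qed

lemma mg_connected_minimal_subset:
  assumes "finite I" "mg_connected N I ends"
  obtains D where "D \<subseteq> I" "mg_connected N D ends"
    "\<And>e. e \<in> D \<Longrightarrow> \<not> mg_connected N (D - {e}) ends"
proof -
  define \<D> where "\<D> = {D. D \<subseteq> I \<and> mg_connected N D ends}"
  have "\<D> \<subseteq> Pow I" unfolding \<D>_def by blast
  then have "finite \<D>" by (rule finite_subset) (simp add: \<open>finite I\<close>)
  moreover have "\<D> \<noteq> {}" using assms(2) unfolding \<D>_def by blast
  ultimately obtain D where "D \<in> \<D>" and minimal: "\<forall>D'\<in>\<D>. D' \<subseteq> D \<longrightarrow> D = D'"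
    using finite_has_minimal by blast
  show ?thesis
  proof (rule that)
    show "D \<subseteq> I" "mg_connected N D ends" using \<open>D \<in> \<D>\<close> unfolding \<D>_def by auto
    fix e assume "e \<in> D"
    show "\<not> mg_connected N (D - {e}) ends"
    proof
      assume "mg_connected N (D - {e}) ends"
      then have "D - {e} \<in> \<D>" using \<open>D \<in> \<D>\<close> unfolding \<D>_def by blast
      with minimal have "D = D - {e}" by blast
      with \<open>e \<in> D\<close> show False by blast
    qed
  qed
qed

lemma sum_card_filter_swap:
  assumes "finite A" "finite B"
  shows "(\<Sum>a\<in>A. card {b\<in>B. P a b}) = (\<Sum>b\<in>B. card {a\<in>A. P a b})"
proof -
  have "card {b\<in>B. P a b} = (\<Sum>b\<in>B. if P a b then 1 else 0)" for a
    using assms by (simp add: sum.If_cases Int_def conj_commute)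
  moreover have "card {a\<in>A. P a b} = (\<Sum>a\<in>A. if P a b then 1 else 0)" for b
    using assms by (simp add: sum.If_cases Int_def conj_commute)
  ultimately show ?thesis by (simp add: sum.swap[of _ A])
qed

text \<open>Otherwise the component C of a in I - {e} has odd degree sum: every edge other than e
  meets C in none or both of its ends, while e meets C exactly once.\<close>

lemma mg_even_degrees_not_bridge:
  assumes "finite N" "finite I"
    and ends: "\<And>i. i \<in> I \<Longrightarrow> ends i \<subseteq> N \<and> card (ends i) = 2"
    and even_degree: "\<And>x. x \<in> N \<Longrightarrow> even (card {i\<in>I. x \<in> ends i})"
    and e: "e \<in> I" "ends e = {a, b}"
  shows "(a, b) \<in> (mg_adj (I - {e}) ends)\<^sup>*"
proof (rule ccontr)
  define C where "C = {x\<in>N. (a, x) \<in> (mg_adj (I - {e}) ends)\<^sup>*}"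
  assume "(a, b) \<notin> (mg_adj (I - {e}) ends)\<^sup>*"
  then have "b \<notin> C" unfolding C_def by blast
  have "a \<in> C" using ends e unfolding C_def by auto
  have "finite C" using \<open>finite N\<close> unfolding C_def by simp
  have closed: "ends i \<subseteq> C" if "i \<in> I - {e}" "x \<in> ends i" "x \<in> C" for i x
    using that ends unfolding C_def by (auto intro: rtrancl_into_rtrancl mg_adjI)
  have even_meet: "even (card {x\<in>C. x \<in> ends i})" if "i \<in> I - {e}" for i
  proof (cases "ends i \<inter> C = {}")
    case True
    then have "{x\<in>C. x \<in> ends i} = {}" by blast
    then show ?thesis by (simp only: card.empty) simp
  next
    case False
    then have "{x\<in>C. x \<in> ends i} = ends i" using closed[OF that] by blast
    then show ?thesis using ends that by simp
  qed
  have degree: "card {i\<in>I. x \<in> ends i} = card {i\<in>I - {e}. x \<in> ends i} + (if x = a then 1 else 0)"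
    if "x \<in> C" for x
  proof -
    have "{i\<in>I. x \<in> ends i} =
        (if x = a then insert e {i\<in>I - {e}. x \<in> ends i} else {i\<in>I - {e}. x \<in> ends i})"
      using e that \<open>b \<notin> C\<close> by auto
    then show ?thesis using \<open>finite I\<close> by simp
  qed
  have "(\<Sum>x\<in>C. card {i\<in>I. x \<in> ends i}) = (\<Sum>x\<in>C. card {i\<in>I - {e}. x \<in> ends i}) + 1"
    using degree \<open>a \<in> C\<close> \<open>finite C\<close> by (simp add: sum.distrib)
  also have "\<dots> = (\<Sum>i\<in>I - {e}. card {x\<in>C. x \<in> ends i}) + 1"
    using \<open>finite C\<close> \<open>finite I\<close> by (subst sum_card_filter_swap) auto
  finally have "(\<Sum>x\<in>C. card {i\<in>I. x \<in> ends i}) = (\<Sum>i\<in>I - {e}. card {x\<in>C. x \<in> ends i}) + 1" .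
  moreover have "even (\<Sum>i\<in>I - {e}. card {x\<in>C. x \<in> ends i})"
    using even_meet by (intro dvd_sum)
  moreover have "even (\<Sum>x\<in>C. card {i\<in>I. x \<in> ends i})"
    using even_degree unfolding C_def by (intro dvd_sum) auto
  ultimately show False by simp
qed

section \<open>Cuts and the dual of a plane triangulation\<close>

definition cut_edges :: "'a set set \<Rightarrow> 'a set \<Rightarrow> 'a set set" where
  "cut_edges E A = {e\<in>E. e \<inter> A \<noteq> {} \<and> \<not> e \<subseteq> A}"

lemma cut_edges_nonempty:
  assumes "graph_connected V E" "u \<in> V" "v \<in> V" "u \<in> A" "v \<notin> A"
  shows "cut_edges E A \<noteq> {}"
proof -
  have "(u, v) \<in> (adj_rel E)\<^sup>*" using assms(1-3) unfolding graph_connected_def by blast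
  then show ?thesis using \<open>v \<notin> A\<close>
  proof (induction rule: rtrancl_induct)
    case base
    then show ?case using \<open>u \<in> A\<close> by simp
  next
    case (step y z)
    then show ?case by (cases "y \<in> A") (auto simp: adj_rel_def cut_edges_def)
  qed
qed

lemma cut_edges_component: "cut_edges E {w. (u, w) \<in> (mg_adj K id)\<^sup>*} \<subseteq> E - K"
proof
  fix e assume e: "e \<in> cut_edges E {w. (u, w) \<in> (mg_adj K id)\<^sup>*}"
  then obtain x y where "x \<in> e" "y \<in> e" and x: "(u, x) \<in> (mg_adj K id)\<^sup>*"
    and y: "(u, y) \<notin> (mg_adj K id)\<^sup>*"
    unfolding cut_edges_def by blast
  have "e \<notin> K"
  proof
    assume "e \<in> K"
    then have "(x, y) \<in> mg_adj K id" using \<open>x \<in> e\<close> \<open>y \<in> e\<close> by (auto intro: mg_adjI)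
    with x y show False by (meson rtrancl_into_rtrancl)
  qed
  then show "e \<in> E - K" using e unfolding cut_edges_def by blast
qed

lemma filter_set_insert: "{x\<in>insert a A. P x} = (if P a then insert a {x\<in>A. P x} else {x\<in>A. P x})"
  by auto

lemma even_card_cut_edges_triangle:
  assumes "p \<noteq> q" "q \<noteq> r" "p \<noteq> r"
  shows "even (card (cut_edges {{p, q}, {q, r}, {p, r}} A))"
  using assms unfolding cut_edges_def
  by (cases "p \<in> A"; cases "q \<in> A"; cases "r \<in> A")
    (simp_all only: filter_set_insert, auto simp: doubleton_eq_iff)

lemma triangle_edges:
  assumes "simple_graph V E" "T \<in> triangles V E"
  obtains p q r where "T = {p, q, r}" "p \<noteq> q" "q \<noteq> r" "p \<noteq> r"
    "{e\<in>E. e \<subseteq> T} = {{p, q}, {q, r}, {p, r}}"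
proof -
  obtain p q r where T: "T = {p, q, r}" "p \<noteq> q" "q \<noteq> r" "p \<noteq> r"
    using assms(2) unfolding triangles_def by (auto simp: card_3_iff)
  have "e \<in> {{p, q}, {q, r}, {p, r}}" if "e \<in> E" "e \<subseteq> T" for e
  proof -
    have "card e = 2" using assms(1) that(1) unfolding simple_graph_def by blast
    then show ?thesis using that(2) T by (auto simp: card_2_iff)
  qed
  moreover have "{{p, q}, {q, r}, {p, r}} \<subseteq> E" using assms(2) T unfolding triangles_def by auto
  ultimately have "{e\<in>E. e \<subseteq> T} = {{p, q}, {q, r}, {p, r}}" using T by auto
  with T that show ?thesis by blast
qed

definition edge_faces :: "'f set \<Rightarrow> ('f \<Rightarrow> 'a set) \<Rightarrow> 'a set \<Rightarrow> 'f set" where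
  "edge_faces F fv e = {f\<in>F. e \<subseteq> fv f}"

locale plane_tri =
  fixes V :: "'a set" and E :: "'a set set" and F :: "'f set" and fv :: "'f \<Rightarrow> 'a set"
  assumes plane_triangulation: "plane_triangulation V E F fv"
begin

lemma simple: "simple_graph V E"
  and connected: "graph_connected V E"
  and finite_F: "finite F"
  and face_triangle: "f \<in> F \<Longrightarrow> fv f \<in> triangles V E"
  and card_edge_faces: "e \<in> E \<Longrightarrow> card (edge_faces F fv e) = 2"
  and faces_at_connected: "x \<in> V \<Longrightarrow> f \<in> faces_at F fv x \<Longrightarrow> g \<in> faces_at F fv x \<Longrightarrow>
    (f, g) \<in> (face_adj_at F fv x)\<^sup>*"
  and euler: "int (card V) - int (card E) + int (card F) = 2"
  using plane_triangulation unfolding plane_triangulation_def edge_faces_def by blast+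

lemma finite_V: "finite V"
  and edge_subset: "e \<in> E \<Longrightarrow> e \<subseteq> V"
  and card_edge: "e \<in> E \<Longrightarrow> card e = 2"
  using simple unfolding simple_graph_def by auto

lemma finite_E: "finite E"
  using finite_V edge_subset by (meson Pow_iff finite_Pow_iff finite_subset subsetI)

lemma card_faces: "3 * card F = 2 * card E"
proof -
  have "card {e\<in>E. e \<subseteq> fv f} = 3" if f: "f \<in> F" for f
  proof -
    obtain p q r where "fv f = {p, q, r}" and pqr: "p \<noteq> q" "q \<noteq> r" "p \<noteq> r"
      and edges: "{e\<in>E. e \<subseteq> fv f} = {{p, q}, {q, r}, {p, r}}"
      by (rule triangle_edges[OF simple face_triangle[OF f]])
    have "{p, q} \<noteq> {q, r}" "{p, q} \<noteq> {p, r}" "{q, r} \<noteq> {p, r}"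
      using pqr by (auto simp: doubleton_eq_iff)
    then show ?thesis unfolding edges by simp
  qed
  then have "(\<Sum>f\<in>F. card {e\<in>E. e \<subseteq> fv f}) = 3 * card F" by simp
  moreover have "(\<Sum>e\<in>E. card {f\<in>F. e \<subseteq> fv f}) = 2 * card E"
    using card_edge_faces unfolding edge_faces_def by simp
  moreover have "(\<Sum>f\<in>F. card {e\<in>E. e \<subseteq> fv f}) = (\<Sum>e\<in>E. card {f\<in>F. e \<subseteq> fv f})"
    using finite_F finite_E by (rule sum_card_filter_swap)
  ultimately show ?thesis by simp
qed

lemma even_card_cut_edges_at_face:
  assumes "f \<in> F"
  shows "even (card {e\<in>cut_edges E A. f \<in> edge_faces F fv e})"
proof -
  obtain p q r where "fv f = {p, q, r}" and pqr: "p \<noteq> q" "q \<noteq> r" "p \<noteq> r"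
    and edges: "{e\<in>E. e \<subseteq> fv f} = {{p, q}, {q, r}, {p, r}}"
    by (rule triangle_edges[OF simple face_triangle[OF assms]])
  have "{e\<in>cut_edges E A. f \<in> edge_faces F fv e} = cut_edges {e\<in>E. e \<subseteq> fv f} A"
    using assms unfolding cut_edges_def edge_faces_def by auto
  then show ?thesis using even_card_cut_edges_triangle[OF pqr] unfolding edges by simp
qed

lemma card_V_le_if_connected:
  assumes "K \<subseteq> E" "mg_connected V K id"
  shows "card V \<le> card K + 1"
proof (rule mg_connected_card_le[OF finite_V _ _ assms(2)])
  show "finite K" using assms(1) finite_E finite_subset by blast
  fix i assume "i \<in> K"
  then have "card i = 2" using assms(1) card_edge by blast
  then show "finite (id i) \<and> card (id i) \<le> 2" by (simp add: card_ge_0_finite)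
qed

lemma card_F_le_if_dual_connected:
  assumes "D \<subseteq> E" "mg_connected F D (edge_faces F fv)"
  shows "card F \<le> card D + 1"
proof (rule mg_connected_card_le[OF finite_F _ _ assms(2)])
  show "finite D" using assms(1) finite_E finite_subset by blast
  fix i assume "i \<in> D"
  then have "card (edge_faces F fv i) = 2" using assms(1) card_edge_faces by blast
  then show "finite (edge_faces F fv i) \<and> card (edge_faces F fv i) \<le> 2"
    by (simp add: card_ge_0_finite)
qed

lemma cut_edge_not_dual_bridge:
  assumes e: "e \<in> cut_edges E A" and f12: "edge_faces F fv e = {f1, f2}"
  shows "(f1, f2) \<in> (mg_adj (cut_edges E A - {e}) (edge_faces F fv))\<^sup>*"
proof (rule mg_even_degrees_not_bridge[where I = "cut_edges E A" and ends = "edge_faces F fv"])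
  show "finite (cut_edges E A)" using finite_E unfolding cut_edges_def by simp
next
  fix i assume "i \<in> cut_edges E A"
  then have "card (edge_faces F fv i) = 2" unfolding cut_edges_def by (simp add: card_edge_faces)
  moreover have "edge_faces F fv i \<subseteq> F" unfolding edge_faces_def by blast
  ultimately show "edge_faces F fv i \<subseteq> F \<and> card (edge_faces F fv i) = 2" by blast
next
  fix f assume "f \<in> F"
  then show "even (card {i\<in>cut_edges E A. f \<in> edge_faces F fv i})"
    by (rule even_card_cut_edges_at_face)
qed (fact finite_F e f12)+

text \<open>If E - D did not connect V, some cut of G would consist of edges of D only, and no edge
  of that cut is a bridge of the dual.\<close>

lemma connected_Diff_minimal_dual_connected:
  assumes D_conn: "mg_connected F D (edge_faces F fv)"
    and D_min: "\<And>e. e \<in> D \<Longrightarrow> \<not> mg_connected F (D - {e}) (edge_faces F fv)"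
  shows "mg_connected V (E - D) id"
proof (rule ccontr)
  assume "\<not> ?thesis"
  then obtain u v where "u \<in> V" "v \<in> V" and uv: "(u, v) \<notin> (mg_adj (E - D) id)\<^sup>*"
    unfolding mg_connected_def by blast
  define A where "A = {w. (u, w) \<in> (mg_adj (E - D) id)\<^sup>*}"
  have "u \<in> A" "v \<notin> A" using uv unfolding A_def by simp_all
  then obtain e where e: "e \<in> cut_edges E A"
    using cut_edges_nonempty[OF connected \<open>u \<in> V\<close> \<open>v \<in> V\<close>] by blast
  have cut_D: "cut_edges E A \<subseteq> D" using cut_edges_component[of E u "E - D"] unfolding A_def by blast
  have "card (edge_faces F fv e) = 2" using e unfolding cut_edges_def by (simp add: card_edge_faces)
  then obtain f1 f2 where f12: "edge_faces F fv e = {f1, f2}" by (auto simp: card_2_iff)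
  have "(f1, f2) \<in> (mg_adj (cut_edges E A - {e}) (edge_faces F fv))\<^sup>*"
    using e f12 by (rule cut_edge_not_dual_bridge)
  also have "\<dots> \<subseteq> (mg_adj (D - {e}) (edge_faces F fv))\<^sup>*"
    using cut_D by (intro rtrancl_mono mg_adj_mono) blast
  finally have "mg_connected F (D - {e}) (edge_faces F fv)"
    by (rule mg_connected_Diff_edge[OF D_conn f12])
  with D_min cut_D e show False by blast
qed

text \<open>The complement of a minimal dual-connected edge set is connected and still contains the
  cycle T; the two edge counts then add up to one less than Euler's formula requires.\<close>

lemma triangle_disconnects_dual:
  assumes T: "T \<in> triangles V E"
  shows "\<not> mg_connected F (E - {e\<in>E. e \<subseteq> T}) (edge_faces F fv)"
proof
  obtain a b c where "T = {a, b, c}" and abc: "a \<noteq> b" "b \<noteq> c" "a \<noteq> c"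
    and X: "{e\<in>E. e \<subseteq> T} = {{a, b}, {b, c}, {a, c}}"
    by (rule triangle_edges[OF simple T])
  assume conn: "mg_connected F (E - {e\<in>E. e \<subseteq> T}) (edge_faces F fv)"
  have fin: "finite (E - {e\<in>E. e \<subseteq> T})" using finite_E by simp
  obtain D where D: "D \<subseteq> E - {e\<in>E. e \<subseteq> T}" "mg_connected F D (edge_faces F fv)"
    and D_min: "\<And>e. e \<in> D \<Longrightarrow> \<not> mg_connected F (D - {e}) (edge_faces F fv)"
    using mg_connected_minimal_subset[OF fin conn] by blast
  define K where "K = E - D - {{a, b}}"
  have "{a, c} \<in> K" "{b, c} \<in> K" and ab: "{a, b} \<in> E - D"
    using D(1) X abc unfolding K_def by (auto simp: doubleton_eq_iff)
  then have "(a, c) \<in> mg_adj K id" "(c, b) \<in> mg_adj K id" by (auto intro: mg_adjI)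
  then have "(a, b) \<in> (mg_adj K id)\<^sup>*" by simp
  then have "mg_connected V K id" unfolding K_def
    using connected_Diff_minimal_dual_connected[OF D(2) D_min] by (intro mg_connected_Diff_edge) simp_all
  then have "card V \<le> card K + 1" by (rule card_V_le_if_connected[rotated]) (auto simp: K_def)
  moreover have "card F \<le> card D + 1" using D by (intro card_F_le_if_dual_connected) auto
  moreover have "card K + 1 = card (E - D)"
  proof -
    have "card (E - D) \<noteq> 0" using ab finite_E by (auto simp: card_eq_0_iff)
    then show ?thesis using card_Diff_singleton[OF ab] unfolding K_def by simp
  qed
  moreover have "card (E - D) + card D = card E"
  proof -
    have "D \<subseteq> E" using D(1) by blast
    then show ?thesis using finite_E by (metis card_Diff_subset card_mono finite_subset le_add_diff_inverse2)
  qed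
  ultimately show False using euler by linarith
qed

lemma faces_at_vertex_dual_connected:
  assumes "u \<in> V" "{e\<in>E. u \<in> e} \<subseteq> I" "g \<in> faces_at F fv u" "h \<in> faces_at F fv u"
  shows "(g, h) \<in> (mg_adj I (edge_faces F fv))\<^sup>*"
proof -
  have "face_adj_at F fv u \<subseteq> mg_adj I (edge_faces F fv)"
  proof
    fix p assume "p \<in> face_adj_at F fv u"
    then obtain g' h' y where p: "p = (g', h')" "g' \<in> F" "h' \<in> F" "u \<in> fv g'" "u \<in> fv h'"
      "y \<noteq> u" "y \<in> fv g'" "y \<in> fv h'"
      unfolding face_adj_at_def faces_at_def by blast
    then have "{u, y} \<in> E" using face_triangle[OF p(2)] unfolding triangles_def by auto
    then show "p \<in> mg_adj I (edge_faces F fv)"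
      unfolding p(1) using p assms(2) by (intro mg_adjI[where i = "{u, y}"]) (auto simp: edge_faces_def)
  qed
  then show ?thesis using faces_at_connected[OF assms(1,3,4)] rtrancl_mono by blast
qed

lemma face_has_vertex_off_triangle:
  assumes f: "f \<in> F" and T: "T \<in> triangles V E" and "fv f \<noteq> T"
  shows "\<exists>x\<in>V - T. f \<in> faces_at F fv x"
proof -
  have "card (fv f) = 3" "fv f \<subseteq> V" using face_triangle[OF f] unfolding triangles_def by auto
  moreover have "card T = 3" "finite T" using T unfolding triangles_def by (auto simp: card_ge_0_finite)
  ultimately have "\<not> fv f \<subseteq> T" using \<open>fv f \<noteq> T\<close> card_subset_eq by metis
  then show ?thesis using \<open>fv f \<subseteq> V\<close> f unfolding faces_at_def by blast
qed

text \<open>Faces meeting at a vertex off T are dual-connected through the edges at that vertex, and a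
  path in G - T carries this along.\<close>

lemma dual_connected_if_nonseparating:
  assumes T: "T \<in> triangles V E" and nonfacial: "\<forall>f\<in>F. fv f \<noteq> T"
    and conn: "graph_connected (V - T) (delete_verts E T)"
  shows "mg_connected F (E - {e\<in>E. e \<subseteq> T}) (edge_faces F fv)"
proof -
  let ?R = "mg_adj (E - {e\<in>E. e \<subseteq> T}) (edge_faces F fv)"
  have around: "(g, h) \<in> ?R\<^sup>*" if "u \<in> V - T" "g \<in> faces_at F fv u" "h \<in> faces_at F fv u" for u g h
    using that by (intro faces_at_vertex_dual_connected) auto
  have "(f, g) \<in> ?R\<^sup>*" if "f \<in> F" "g \<in> F" for f g
  proof -
    obtain x y where x: "x \<in> V - T" "f \<in> faces_at F fv x" and y: "y \<in> V - T" "g \<in> faces_at F fv y"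
      using face_has_vertex_off_triangle[OF _ T] nonfacial \<open>f \<in> F\<close> \<open>g \<in> F\<close> by meson
    have "(x, y) \<in> (adj_rel (delete_verts E T))\<^sup>*" using conn x y unfolding graph_connected_def by blast
    then have "\<forall>h\<in>faces_at F fv y. (f, h) \<in> ?R\<^sup>*"
    proof (induction rule: rtrancl_induct)
      case base
      show ?case using around x by blast
    next
      case (step z w)
      then have zw: "{z, w} \<in> E" "w \<notin> T" unfolding adj_rel_def delete_verts_def by auto
      then have "card (edge_faces F fv {z, w}) = 2" by (intro card_edge_faces)
      then obtain k where "k \<in> edge_faces F fv {z, w}" by fastforce
      then have k: "k \<in> faces_at F fv z" "k \<in> faces_at F fv w"
        unfolding edge_faces_def faces_at_def by auto
      have "w \<in> V - T" using edge_subset zw by blast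
      show ?case
      proof
        fix h assume "h \<in> faces_at F fv w"
        then have "(k, h) \<in> ?R\<^sup>*" using around \<open>w \<in> V - T\<close> k(2) by blast
        moreover have "(f, k) \<in> ?R\<^sup>*" using step.IH k(1) by blast
        ultimately show "(f, h) \<in> ?R\<^sup>*" by (rule rtrancl_trans[rotated])
      qed
    qed
    then show ?thesis using y by blast
  qed
  then show ?thesis unfolding mg_connected_def by blast
qed

lemma triangle_facial:
  assumes "\<not> (\<exists>T. separating_triangle V E T)" "T \<in> triangles V E"
  shows "\<exists>f\<in>F. fv f = T"
  using assms triangle_disconnects_dual dual_connected_if_nonseparating
  unfolding separating_triangle_def by blast

end

section \<open>The stacked triangulation\<close>

lemma Inl_edge_in_stack_edges_iff: "{Inl x, Inl y} \<in> stack_edges E F fv \<longleftrightarrow> {x, y} \<in> E"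
proof -
  have "{Inl x, Inl y} \<in> (\<lambda>e. Inl ` e) ` E \<longleftrightarrow> {x, y} \<in> E"
  proof
    assume "{Inl x, Inl y} \<in> (\<lambda>e. Inl ` e) ` E"
    then obtain e where "e \<in> E" "{Inl x, Inl y} = Inl ` e" by blast
    moreover from this(2) have "{x, y} = e" by (metis image_empty image_insert inj_Inl inj_image_eq_iff)
    ultimately show "{x, y} \<in> E" by simp
  next
    assume "{x, y} \<in> E"
    then show "{Inl x, Inl y} \<in> (\<lambda>e. Inl ` e) ` E" by (rule rev_image_eqI) simp
  qed
  then show ?thesis unfolding stack_edges_def by (auto simp: doubleton_eq_iff)
qed

lemma Inr_edge_in_stack_edges: "{z, Inr f} \<in> stack_edges E F fv \<Longrightarrow> \<exists>x\<in>fv f. z = Inl x"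
  unfolding stack_edges_def by (auto simp: doubleton_eq_iff)

lemma two_le_card_Int_if_subset_card_le_4:
  assumes "finite U" "card U \<le> 4" "T1 \<subseteq> U" "T2 \<subseteq> U" "card T1 = 3" "card T2 = 3"
  shows "2 \<le> card (T1 \<inter> T2)"
proof -
  have "finite T1" "finite T2" using assms finite_subset by blast+
  then have "card T1 + card T2 = card (T1 \<union> T2) + card (T1 \<inter> T2)" by (rule card_Un_Int)
  moreover have "card (T1 \<union> T2) \<le> card U" using assms by (intro card_mono) auto
  ultimately show ?thesis using assms by linarith
qed

lemma nu_le:
  assumes "\<And>S. edge_disjoint_triangles V E S \<Longrightarrow> card S \<le> k"
  shows "nu V E \<le> k"
proof -
  let ?M = "{card S | S. edge_disjoint_triangles V E S}"
  have "?M \<subseteq> {..k}" using assms by auto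
  then have "finite ?M" by (rule finite_subset) simp
  moreover have "edge_disjoint_triangles V E {}" unfolding edge_disjoint_triangles_def by simp
  then have "?M \<noteq> {}" by blast
  ultimately show ?thesis unfolding nu_def using assms by (intro Max.boundedI) auto
qed

context plane_tri
begin

lemma stack_triangle_within_face:
  assumes no_sep: "\<not> (\<exists>T. separating_triangle V E T)"
    and T: "T \<in> triangles (stack_verts V F) (stack_edges E F fv)"
  shows "\<exists>f\<in>F. T \<subseteq> insert (Inr f) (Inl ` fv f)"
proof -
  have T_sub: "T \<subseteq> Inl ` V \<union> Inr ` F" and "card T = 3"
    and adj: "\<And>u w. u \<in> T \<Longrightarrow> w \<in> T \<Longrightarrow> u \<noteq> w \<Longrightarrow> {u, w} \<in> stack_edges E F fv"
    using T unfolding triangles_def stack_verts_def by auto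
  show ?thesis
  proof (cases "\<exists>f. Inr f \<in> T")
    case True
    then obtain f where f: "Inr f \<in> T" by blast
    have "T \<subseteq> insert (Inr f) (Inl ` fv f)"
    proof
      fix z assume "z \<in> T"
      then show "z \<in> insert (Inr f) (Inl ` fv f)"
        using adj[OF _ f, of z] Inr_edge_in_stack_edges[of z f] by blast
    qed
    moreover have "f \<in> F" using f T_sub by auto
    ultimately show ?thesis by blast
  next
    case False
    then have T_eq: "T = Inl ` (Inl -` T)" using T_sub by (auto elim: sum.exhaust_sel)
    then have "card (Inl -` T) = 3" using \<open>card T = 3\<close> by (metis card_image inj_Inl inj_on_subset subset_UNIV)
    moreover have "Inl -` T \<subseteq> V" using T_sub by auto
    moreover have "{x, y} \<in> E" if "x \<in> Inl -` T" "y \<in> Inl -` T" "x \<noteq> y" for x y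
      using adj[of "Inl x" "Inl y"] that by (simp add: Inl_edge_in_stack_edges_iff)
    ultimately have "Inl -` T \<in> triangles V E" unfolding triangles_def by blast
    then obtain f where "f \<in> F" "fv f = Inl -` T" using triangle_facial[OF no_sep] by blast
    then show ?thesis using T_eq by blast
  qed
qed

lemma nu_stack_le_card_faces:
  assumes "\<not> (\<exists>T. separating_triangle V E T)"
  shows "nu (stack_verts V F) (stack_edges E F fv) \<le> card F"
proof (rule nu_le)
  fix S assume S: "edge_disjoint_triangles (stack_verts V F) (stack_edges E F fv) S"
  then have "\<forall>T\<in>S. \<exists>f\<in>F. T \<subseteq> insert (Inr f) (Inl ` fv f)"
    using stack_triangle_within_face[OF assms] unfolding edge_disjoint_triangles_def by blast
  then obtain \<phi> where \<phi>: "\<And>T. T \<in> S \<Longrightarrow> \<phi> T \<in> F \<and> T \<subseteq> insert (Inr (\<phi> T)) (Inl ` fv (\<phi> T))"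
    by metis
  have "inj_on \<phi> S"
  proof (rule inj_onI, rule ccontr)
    fix T1 T2 assume T12: "T1 \<in> S" "T2 \<in> S" "\<phi> T1 = \<phi> T2" "T1 \<noteq> T2"
    let ?U = "insert (Inr (\<phi> T1)) (Inl ` fv (\<phi> T1))"
    have "card (fv (\<phi> T1)) = 3" using face_triangle \<phi>[OF T12(1)] unfolding triangles_def by blast
    then have "finite ?U" "card ?U \<le> 4"
      using card_image_le[of "fv (\<phi> T1)" Inl] by (auto simp: card_insert_if card_ge_0_finite)
    moreover have "card T1 = 3" "card T2 = 3"
      using S T12 unfolding edge_disjoint_triangles_def triangles_def by auto
    ultimately have "2 \<le> card (T1 \<inter> T2)"
      using \<phi>[OF T12(1)] \<phi>[OF T12(2)] T12(3) by (intro two_le_card_Int_if_subset_card_le_4) auto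
    moreover have "card (T1 \<inter> T2) \<le> 1" using S T12 unfolding edge_disjoint_triangles_def by blast
    ultimately show False by simp
  qed
  then show "card S \<le> card F" using \<phi> finite_F by (intro card_inj_on_le) auto
qed

end

theorem lemma4p6:
  fixes V :: "'a set" and E :: "'a set set" and F :: "'f set" and fv :: "'f \<Rightarrow> 'a set"
  assumes "plane_triangulation V E F fv"
    and "\<not> (\<exists>T. separating_triangle V E T)"
  shows "int (nu (stack_verts V F) (stack_edges E F fv)) \<le> 2 * int (card V) - 4"
proof -
  interpret plane_tri V E F fv by (rule plane_tri.intro) (fact assms(1))
  have "nu (stack_verts V F) (stack_edges E F fv) \<le> card F"
    using assms(2) by (rule nu_stack_le_card_faces)
  moreover have "3 * card F = 2 * card E" by (rule card_faces)
  ultimately show ?thesis using euler by linarith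
qed

end
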